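(* For all $n \ge 0$, $$d_0(W_n1,\,1W_n) \;=\; \frac12 + \frac{1}{2\cdot 3^n} \;=\; d_0(1W_n,\,W_n1).$$
   Context: Words are finite strings over $\{0,1\}$; for a word $\alpha$, $\alpha(i)$ denotes its $i$-th letter and $|\alpha|$ its length. Define $W_0 = 0$ and $W_{m+1} = W_m W_m 1 W_m$ for $m\ge 0$. For words $\alpha,\beta$ with $|\alpha|=|\beta|$ and $\alpha$ containing at least one $0$, the modified $0$-Hamming distance is $$d_0(\alpha,\beta) = \frac{|\{i : \alpha(i)=0 \text{ and } \beta(i)=1\}|}{|\{i : \alpha(i)=0\}|}.$$ Here $W_n1$ and $1W_n$ denote concatenations with the one-letter word $1$. *)

theory Defs
  imports Complex_Main
begin

text \<open>Words over {0,1} are lists of naturals (letters 0 and 1).\<close>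
type_synonym word = "nat list"

fun W :: "nat \<Rightarrow> word" where
  "W 0 = [0]"
| "W (Suc m) = W m @ W m @ [1] @ W m"

text \<open>Modified 0-Hamming distance (meaningful when |alpha| = |beta| and alpha contains a 0).\<close>
definition d0 :: "word \<Rightarrow> word \<Rightarrow> real" where
  "d0 \<alpha> \<beta> = real (card {i. i < length \<alpha> \<and> \<alpha> ! i = 0 \<and> \<beta> ! i = 1})
                 / real (card {i. i < length \<alpha> \<and> \<alpha> ! i = 0})"

end

theory Submission
  imports Defs
begin

text \<open>Comparing \<open>W n @ [1]\<close> with \<open>1 # W n\<close> position by position compares each
letter of \<open>1 # W n @ [1]\<close> with its predecessor, so the two numerators of \<open>d0\<close> count the
factors \<open>10\<close> and \<open>01\<close> of \<open>1 # W n @ [1]\<close>. Since \<open>W m\<close> starts and ends with \<open>0\<close>, passing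
to \<open>W m @ W m @ [1] @ W m\<close> triples both counts and adds exactly one new \<open>10\<close> and one new
\<open>01\<close> at the junctions; hence both counts are \<open>(3^n + 1)/2\<close>, while \<open>W n\<close> has \<open>3^n\<close> zeros.\<close>

definition factor_count :: "nat \<Rightarrow> nat \<Rightarrow> word \<Rightarrow> nat" where
  "factor_count a b w = length (filter (\<lambda>(x, y). x = a \<and> y = b) (zip w (tl w)))"

lemma factor_count_Nil [simp]: "factor_count a b [] = 0"
  by (simp add: factor_count_def)

lemma factor_count_Cons:
  "factor_count a b (x # w) = factor_count a b w + (if w \<noteq> [] \<and> x = a \<and> hd w = b then 1 else 0)"
  by (cases w) (auto simp: factor_count_def)

lemma factor_count_append:
  "factor_count a b (u @ w) = factor_count a b u + factor_count a b w
     + (if u \<noteq> [] \<and> w \<noteq> [] \<and> last u = a \<and> hd w = b then 1 else 0)"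
  by (induction u) (auto simp: factor_count_Cons)

lemma card_shift_mismatch:
  "card {i. i < length (c # w) \<and> (c # w) ! i = a \<and> (w @ [c]) ! i = b} = factor_count a b (c # w @ [c])"
proof -
  have "zip ((c # w) @ [c]) (w @ [c]) = zip (c # w) (w @ [c])"
    by (subst zip_append1) simp
  then show ?thesis
    by (simp add: factor_count_def length_filter_conv_card nth_zip cong: conj_cong)
qed

lemma card_nth_eq: "card {i. i < length w \<and> w ! i = x} = count_list w x"
  by (simp add: count_list_eq_length_filter length_filter_conv_card eq_commute)

lemma d0_append_one_Cons_one:
  "d0 (w @ [1]) (1 # w) = factor_count 1 0 (1 # w @ [1]) / count_list w 0"
proof -
  have "card {i. i < length (w @ [1]) \<and> (w @ [1]) ! i = 0 \<and> (1 # w) ! i = 1}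
      = card {i. i < length (1 # w) \<and> (1 # w) ! i = 1 \<and> (w @ [1]) ! i = 0}"
    by (rule arg_cong[where f = card]) auto
  also have "\<dots> = factor_count 1 0 (1 # w @ [1])"
    by (rule card_shift_mismatch)
  finally show ?thesis
    unfolding d0_def card_nth_eq by simp
qed

lemma d0_Cons_one_append_one:
  "d0 (1 # w) (w @ [1]) = factor_count 0 1 (1 # w @ [1]) / count_list w 0"
  unfolding d0_def card_shift_mismatch card_nth_eq by simp

lemma W_not_Nil [simp]: "W n \<noteq> []"
  by (induction n) auto

lemma hd_W [simp]: "hd (W n) = 0"
  by (induction n) auto

lemma last_W [simp]: "last (W n) = 0"
  by (induction n) auto

lemma count_list_W_0: "count_list (W n) 0 = 3 ^ n"
  by (induction n) auto

lemma factor_count_W: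
  assumes "(a, b) = (0, 1) \<or> (a, b) = (1, 0)"
  shows "2 * factor_count a b (W n) + 1 = 3 ^ n"
proof (induction n)
  case (Suc m)
  have "factor_count a b (W (Suc m)) = 3 * factor_count a b (W m) + 1"
    using assms by (auto simp: factor_count_append factor_count_Cons)
  with Suc show ?case by simp
qed (simp add: factor_count_Cons)

lemma factor_count_W_padded:
  assumes "(a, b) = (0, 1) \<or> (a, b) = (1, 0)"
  shows "2 * factor_count a b (1 # W n @ [1]) = 3 ^ n + 1"
  using assms factor_count_W[OF assms, of n]
  by (auto simp: factor_count_append factor_count_Cons)

theorem lemma1:
  fixes n :: nat
  shows "d0 (W n @ [1]) ([1] @ W n) = 1/2 + 1 / (2 * 3 ^ n)
       \<and> d0 ([1] @ W n) (W n @ [1]) = 1/2 + 1 / (2 * 3 ^ n)"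
proof -
  have ratio: "real k / 3 ^ n = 1/2 + 1 / (2 * 3 ^ n)" if "2 * k = 3 ^ n + 1" for k
  proof -
    have "2 * real k = 3 ^ n + 1"
      using arg_cong[OF that, of real] by simp
    then show ?thesis by (simp add: field_simps)
  qed
  show ?thesis
    unfolding append_Cons append_Nil d0_append_one_Cons_one d0_Cons_one_append_one count_list_W_0
    using ratio[OF factor_count_W_padded[of 1 0 n]] ratio[OF factor_count_W_padded[of 0 1 n]]
    by simp
qed

end
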